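(* Let $H$ be a graph with degree sequence $\pi(H)=(h_1,\ldots,h_k)$ and let $\pi=(d_1,\ldots,d_n)$ be a graphic sequence with $d_1\le M$ (i.e., every term is at most $M$) such that there are terms $d_{i_1},\ldots,d_{i_k}$ of $\pi$ (with distinct indices $i_1,\ldots,i_k$) satisfying $d_{i_j}\ge h_j$ for $1\le j\le k$. If $\pi$ has at least $2M^2+k$ positive terms, then there is a realization $G$ of $\pi$ containing a copy of $H$ whose vertices are the vertices of $G$ corresponding to the terms $d_{i_1},\ldots,d_{i_k}$.
   Context: A sequence of nonnegative integers is graphic if it is the degree sequence of some (finite simple) graph, called a realization; graphic sequences are written in nonincreasing order. The degree sequence of $H$ is written in nonincreasing order. *)

theory Defs
  imports Main
begin

definition is_graph :: "nat \<Rightarrow> (nat \<Rightarrow> nat \<Rightarrow> bool) \<Rightarrow> bool" where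
  "is_graph n E \<longleftrightarrow> (\<forall>u v. E u v \<longrightarrow> u < n \<and> v < n \<and> u \<noteq> v \<and> E v u)"

definition degree :: "nat \<Rightarrow> (nat \<Rightarrow> nat \<Rightarrow> bool) \<Rightarrow> nat \<Rightarrow> nat" where
  "degree n E v = card {u. u < n \<and> E v u}"

definition realizes :: "(nat \<Rightarrow> nat \<Rightarrow> bool) \<Rightarrow> nat list \<Rightarrow> bool" where
  "realizes E d \<longleftrightarrow> is_graph (length d) E \<and>
     (\<forall>i < length d. degree (length d) E i = d ! i)"

definition graphic :: "nat list \<Rightarrow> bool" where
  "graphic d \<longleftrightarrow> sorted_wrt (\<ge>) d \<and> (\<exists>E. realizes E d)"

end

theory Submission
  imports Defs "HOL-Library.Multiset"
begin

text \<open>Take a realization \<open>G\<close> of \<open>d\<close> in which as few edges of the prescribed copy of \<open>H\<close>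
as possible are missing, and suppose the copy lacks the edge \<open>uv\<close>, where \<open>u = idx j\<^sub>0\<close> and
\<open>v = idx j\<^sub>1\<close>. Since \<open>d\<^sub>u\<close> is at least the degree of \<open>j\<^sub>0\<close> in \<open>H\<close> and \<open>v\<close> is not a
neighbour of \<open>u\<close>, some edge \<open>ux\<close> of \<open>G\<close> is not an edge of the copy; likewise some \<open>vy\<close>.
If \<open>x \<noteq> y\<close> are not adjacent, replace \<open>ux, vy\<close> by \<open>uv, xy\<close>. Otherwise \<open>y\<close> is \<open>x\<close> or a
neighbour of \<open>x\<close>; the copy, the neighbourhoods of \<open>x\<close> and \<open>y\<close> and the second neighbourhood
of \<open>x\<close> cover fewer than \<open>2M\<^sup>2 + k\<close> vertices, so some vertex \<open>a\<close> of positive degree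
avoids all of them, and with a neighbour \<open>b\<close> of \<open>a\<close> we replace \<open>ux, vy, ab\<close> by
\<open>uv, ya, xb\<close>. Either switch preserves all degrees and all edges of the copy while adding
\<open>uv\<close>, contradicting minimality.\<close>

definition edges :: "(nat \<times> nat) list \<Rightarrow> nat set set" where
  "edges ps = (\<lambda>(p, q). {p, q}) ` set ps"

definition endpoints :: "(nat \<times> nat) list \<Rightarrow> nat list" where
  "endpoints ps = concat (map (\<lambda>(p, q). [p, q]) ps)"

definition switch :: "(nat \<Rightarrow> nat \<Rightarrow> bool) \<Rightarrow> (nat \<times> nat) list \<Rightarrow> (nat \<times> nat) list \<Rightarrow> nat \<Rightarrow> nat \<Rightarrow> bool" where
  "switch G rs as p q \<longleftrightarrow> (G p q \<and> {p, q} \<notin> edges rs) \<or> {p, q} \<in> edges as"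

definition neighbours :: "nat \<Rightarrow> (nat \<Rightarrow> nat \<Rightarrow> bool) \<Rightarrow> nat \<Rightarrow> nat set" where
  "neighbours n G w = {q. q < n \<and> G w q}"

lemma finite_neighbours [simp]: "finite (neighbours n G w)"
  by (simp add: neighbours_def)

lemma edgesI: "(p, q) \<in> set ps \<Longrightarrow> {p, q} \<in> edges ps"
  unfolding edges_def by force

lemma edgesE:
  assumes "e \<in> edges ps"
  obtains p q where "(p, q) \<in> set ps" "e = {p, q}"
  using assms unfolding edges_def by auto

lemma card_incident_edges_eq_count_endpoints:
  assumes "distinct (map (\<lambda>(p, q). {p, q}) ps)" and "\<forall>(p, q) \<in> set ps. p \<noteq> q"
  shows "card {e \<in> edges ps. w \<in> e} = count (mset (endpoints ps)) w"
  using assms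
proof (induction ps)
  case Nil
  then show ?case by (simp add: edges_def endpoints_def)
next
  case (Cons pq ps)
  obtain p q where pq: "pq = (p, q)" by fastforce
  have new: "{p, q} \<notin> edges ps" using Cons.prems unfolding pq edges_def by auto
  have "{e \<in> edges (pq # ps). w \<in> e} =
      (if w = p \<or> w = q then insert {p, q} {e \<in> edges ps. w \<in> e} else {e \<in> edges ps. w \<in> e})"
    unfolding pq edges_def by auto
  moreover have "finite (edges ps)" by (simp add: edges_def)
  ultimately show ?case
    using Cons new pq by (auto simp: endpoints_def)
qed

lemma card_partners_eq_card_incident:
  "card {q. {w, q} \<in> edges ps} = card {e \<in> edges ps. w \<in> e}"
proof -
  have inj: "inj_on (\<lambda>q. {w, q}) {q. {w, q} \<in> edges ps}"
    by (rule inj_onI) (auto simp: doubleton_eq_iff)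
  have "(\<lambda>q. {w, q}) ` {q. {w, q} \<in> edges ps} = {e \<in> edges ps. w \<in> e}"
  proof
    show "{e \<in> edges ps. w \<in> e} \<subseteq> (\<lambda>q. {w, q}) ` {q. {w, q} \<in> edges ps}"
    proof
      fix e assume e: "e \<in> {e \<in> edges ps. w \<in> e}"
      then obtain p q where "e = {p, q}" by (blast elim: edgesE)
      moreover have "w = p \<or> w = q" using e \<open>e = {p, q}\<close> by simp
      ultimately obtain z where "e = {w, z}" by (metis insert_commute)
      with e show "e \<in> (\<lambda>q. {w, q}) ` {q. {w, q} \<in> edges ps}" by blast
    qed
  qed auto
  then show ?thesis using card_image[OF inj] by simp
qed

lemma is_graph_switch:
  assumes G: "is_graph n G" and added: "\<forall>(p, q) \<in> set as. p \<noteq> q \<and> p < n \<and> q < n"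
  shows "is_graph n (switch G rs as)"
  unfolding is_graph_def
proof (intro allI impI)
  fix p q assume "switch G rs as p q"
  then consider "G p q" "{p, q} \<notin> edges rs" | "{p, q} \<in> edges as" unfolding switch_def by blast
  then show "p < n \<and> q < n \<and> p \<noteq> q \<and> switch G rs as q p"
  proof cases
    case 1
    then have "p < n \<and> q < n \<and> p \<noteq> q \<and> G q p" using G unfolding is_graph_def by blast
    then show ?thesis using 1(2) by (simp add: switch_def insert_commute)
  next
    case 2
    then obtain p' q' where "(p', q') \<in> set as" "{p, q} = {p', q'}" by (rule edgesE)
    then show ?thesis using added 2 by (auto simp: switch_def insert_commute doubleton_eq_iff)
  qed
qed

lemma degree_switch:
  assumes G: "is_graph n G"
    and removed: "\<forall>(p, q) \<in> set rs. G p q"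
    and added: "\<forall>(p, q) \<in> set as. p \<noteq> q \<and> p < n \<and> q < n \<and> \<not> G p q"
    and distinct: "distinct (map (\<lambda>(p, q). {p, q}) rs)" "distinct (map (\<lambda>(p, q). {p, q}) as)"
    and same_endpoints: "mset (endpoints rs) = mset (endpoints as)"
  shows "degree n (switch G rs as) w = degree n G w"
proof -
  have sym: "G p q \<Longrightarrow> G q p" and rng: "G p q \<Longrightarrow> p < n \<and> q < n \<and> p \<noteq> q" for p q
    using G by (auto simp: is_graph_def)
  have removed_edge: "G p q" if e: "{p, q} \<in> edges rs" for p q
  proof -
    obtain p' q' where "(p', q') \<in> set rs" "{p, q} = {p', q'}" using e by (rule edgesE)
    then show ?thesis using removed sym by (auto simp: doubleton_eq_iff)
  qed
  have added_edge: "p \<noteq> q \<and> p < n \<and> q < n \<and> \<not> G p q" if e: "{p, q} \<in> edges as" for p q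
  proof -
    obtain p' q' where "(p', q') \<in> set as" "{p, q} = {p', q'}" using e by (rule edgesE)
    then show ?thesis using added sym by (auto simp: doubleton_eq_iff)
  qed
  define N where "N = neighbours n G w"
  define RN where "RN = {q. {w, q} \<in> edges rs}"
  define AN where "AN = {q. {w, q} \<in> edges as}"
  have "RN \<subseteq> N" using removed_edge rng unfolding RN_def N_def neighbours_def by blast
  have "AN \<subseteq> {..<n}" "AN \<inter> N = {}" using added_edge unfolding AN_def N_def neighbours_def by auto
  have "card RN = card AN"
  proof -
    have "\<forall>(p, q) \<in> set rs. p \<noteq> q" using removed rng by fast
    moreover have "\<forall>(p, q) \<in> set as. p \<noteq> q" using added by fast
    ultimately show ?thesis
      using card_incident_edges_eq_count_endpoints[OF distinct(1)]
        card_incident_edges_eq_count_endpoints[OF distinct(2)]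
      by (simp add: RN_def AN_def card_partners_eq_card_incident same_endpoints)
  qed
  have "{q. q < n \<and> switch G rs as w q} = (N - RN) \<union> AN"
    using \<open>AN \<subseteq> {..<n}\<close> unfolding switch_def N_def RN_def AN_def neighbours_def by auto
  moreover have "card ((N - RN) \<union> AN) = card (N - RN) + card AN"
    using finite_subset[OF \<open>AN \<subseteq> {..<n}\<close>] \<open>AN \<inter> N = {}\<close>
    by (intro card_Un_disjoint) (auto simp: N_def)
  moreover have "card (N - RN) = card N - card RN"
    using \<open>RN \<subseteq> N\<close> by (simp add: card_Diff_subset finite_subset N_def)
  moreover have "card RN \<le> card N" using \<open>RN \<subseteq> N\<close> by (simp add: card_mono N_def)
  ultimately have "degree n (switch G rs as) w = card N"
    using \<open>card RN = card AN\<close> unfolding degree_def by simp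
  then show ?thesis unfolding N_def neighbours_def degree_def .
qed

lemma realizes_switch:
  assumes re: "realizes G d"
    and removed: "\<forall>(p, q) \<in> set rs. G p q"
    and added: "\<forall>(p, q) \<in> set as. p \<noteq> q \<and> p < length d \<and> q < length d \<and> \<not> G p q"
    and distinct: "distinct (map (\<lambda>(p, q). {p, q}) rs)" "distinct (map (\<lambda>(p, q). {p, q}) as)"
    and same_endpoints: "mset (endpoints rs) = mset (endpoints as)"
  shows "realizes (switch G rs as) d"
proof -
  have G: "is_graph (length d) G" using re by (simp add: realizes_def)
  have "is_graph (length d) (switch G rs as)" using added by (intro is_graph_switch[OF G]) fast
  moreover have "degree (length d) (switch G rs as) i = d ! i" if "i < length d" for i
    using degree_switch[OF G removed added distinct same_endpoints] re that by (simp add: realizes_def)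
  ultimately show ?thesis by (simp add: realizes_def)
qed

lemma exists_neighbour_outside_image:
  assumes re: "realizes G d" and u: "u < length d"
    and J: "finite J" "card J \<le> d ! u" and j1: "j1 \<in> J" "\<not> G u (idx j1)"
  shows "\<exists>x. G u x \<and> x \<notin> idx ` J"
proof (rule ccontr)
  assume "\<not> ?thesis"
  then have N: "neighbours (length d) G u \<subseteq> idx ` (J - {j1})" using j1 unfolding neighbours_def by auto
  have "d ! u = card (neighbours (length d) G u)" using re u by (simp add: realizes_def degree_def neighbours_def)
  also have "\<dots> \<le> card (idx ` (J - {j1}))" using N J(1) by (intro card_mono) auto
  also have "\<dots> \<le> card (J - {j1})" using J(1) by (intro card_image_le) auto
  also have "\<dots> < card J" using J(1) j1(1) by (rule card_Diff1_less)
  finally show False using J(2) by simp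
qed

lemma card_neighbours_le:
  assumes re: "realizes G d" and bound: "\<forall>z \<in> set d. z \<le> M"
  shows "card (neighbours (length d) G w) \<le> M"
proof (cases "w < length d")
  case True
  then have "card (neighbours (length d) G w) = d ! w"
    using re by (simp add: realizes_def degree_def neighbours_def)
  then show ?thesis using bound True by simp
next
  case False
  then have "neighbours (length d) G w = {}"
    using re unfolding realizes_def is_graph_def neighbours_def by blast
  then show ?thesis by simp
qed

lemma card_vicinity_less:
  assumes re: "realizes G d" and bound: "\<forall>z \<in> set d. z \<le> M"
    and ux: "G u x" and vy: "G v y"
  defines "N \<equiv> neighbours (length d) G"
  shows "card ((N x - {u}) \<union> (N y - {v}) \<union> (\<Union>q \<in> N x. N q)) < 2 * M ^ 2"
proof -
  have card_N: "card (N w) \<le> M" for w unfolding N_def by (rule card_neighbours_le[OF re bound])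
  have fin_N: "finite (N w)" for w by (simp add: N_def)
  have "x \<in> N u" "u \<in> N x" "v \<in> N y"
    using re ux vy unfolding N_def neighbours_def realizes_def is_graph_def by blast+
  then have "0 < card (N u)" using fin_N[of u] card_gt_0_iff by blast
  then obtain m where M: "M = Suc m" using card_N[of u] gr0_conv_Suc by (metis less_le_trans)
  have "card (\<Union>q \<in> N x. N q) \<le> (\<Sum>q \<in> N x. card (N q))" by (rule card_UN_le[OF fin_N])
  also have "\<dots> \<le> card (N x) * M" using sum_bounded_above[of "N x" "\<lambda>q. card (N q)" M] card_N by simp
  also have "\<dots> \<le> M * M" using card_N[of x] by (rule mult_le_mono1)
  finally have "card (\<Union>q \<in> N x. N q) \<le> M * M" .
  moreover have "card (N x - {u}) \<le> M - 1" "card (N y - {v}) \<le> M - 1"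
    using card_N[of x] card_N[of y] \<open>u \<in> N x\<close> \<open>v \<in> N y\<close> fin_N
    by (simp_all add: card_Diff_singleton diff_le_mono)
  moreover have "card ((N x - {u}) \<union> (N y - {v}) \<union> (\<Union>q \<in> N x. N q))
      \<le> card (N x - {u}) + card (N y - {v}) + card (\<Union>q \<in> N x. N q)"
    using card_Un_le[of "(N x - {u}) \<union> (N y - {v})" "\<Union>q \<in> N x. N q"]
      card_Un_le[of "N x - {u}" "N y - {v}"]
    by linarith
  ultimately show ?thesis unfolding M by (simp add: power2_eq_square)
qed

lemma exists_edge_far_from:
  assumes re: "realizes G d" and bound: "\<forall>z \<in> set d. z \<le> M"
    and I: "finite I" "card I + 2 * M ^ 2 \<le> card {i. i < length d \<and> d ! i > 0}"
    and ux: "G u x" "u \<in> I" and vy: "G v y" "v \<in> I"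
  shows "\<exists>a b. G a b \<and> a \<notin> I \<and> a \<noteq> x \<and> \<not> G x a \<and> \<not> G y a \<and> \<not> G x b"
proof -
  let ?n = "length d"
  define N where "N = neighbours ?n G"
  define V where "V = (N x - {u}) \<union> (N y - {v}) \<union> (\<Union>q \<in> N x. N q)"
  have sym: "G p q \<Longrightarrow> G q p" and rng: "G p q \<Longrightarrow> p < ?n \<and> q < ?n \<and> p \<noteq> q" for p q
    using re by (auto simp: realizes_def is_graph_def)
  have "card (I \<union> V) < card I + 2 * M ^ 2"
    using card_Un_le[of I V] card_vicinity_less[OF re bound ux(1) vy(1)] unfolding V_def N_def
    by linarith
  also have "\<dots> \<le> card {i. i < ?n \<and> d ! i > 0}" by (rule I(2))
  finally have "card (I \<union> V) < card {i. i < ?n \<and> d ! i > 0}" .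
  moreover have "finite (I \<union> V)" unfolding V_def N_def using I(1) by simp
  ultimately have "\<not> {i. i < ?n \<and> d ! i > 0} \<subseteq> I \<union> V"
    using card_mono[of "I \<union> V" "{i. i < ?n \<and> d ! i > 0}"] by linarith
  then obtain a where a: "a < ?n" "d ! a > 0" "a \<notin> I" "a \<notin> V" by blast
  then have "card (N a) > 0" using re by (simp add: realizes_def degree_def N_def neighbours_def)
  then obtain b where ab: "G a b"
    unfolding N_def neighbours_def by (metis (no_types, lifting) card_gt_0_iff ex_in_conv mem_Collect_eq)
  have "x \<in> N u" "u \<in> N x" using ux sym rng unfolding N_def neighbours_def by blast+
  then have "a \<noteq> x" using a(4) unfolding V_def by blast
  moreover have "\<not> G x b"
  proof
    assume "G x b"
    then have "b \<in> N x" "a \<in> N b" using ab sym rng unfolding N_def neighbours_def by blast+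
    then show False using a(4) unfolding V_def by blast
  qed
  moreover have "\<not> G x a" "\<not> G y a"
    using a ux(2) vy(2) rng unfolding V_def N_def neighbours_def by blast+
  ultimately show ?thesis using a(3) ab by blast
qed

lemma realizes_two_switch:
  assumes re: "realizes G d" and edges: "G u x" "G v y"
    and non_edges: "u \<noteq> v" "\<not> G u v" "x \<noteq> y" "\<not> G x y"
  shows "realizes (switch G [(u, x), (v, y)] [(u, v), (x, y)]) d"
proof (rule realizes_switch[OF re])
  have rng: "G p q \<Longrightarrow> p < length d \<and> q < length d \<and> p \<noteq> q" for p q
    using re by (auto simp: realizes_def is_graph_def)
  have "x \<noteq> v" using edges(1) non_edges(2) by blast
  show "\<forall>(p, q) \<in> set [(u, x), (v, y)]. G p q" using edges by simp
  show "\<forall>(p, q) \<in> set [(u, v), (x, y)]. p \<noteq> q \<and> p < length d \<and> q < length d \<and> \<not> G p q"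
    using non_edges rng[OF edges(1)] rng[OF edges(2)] by simp
  show "distinct (map (\<lambda>(p, q). {p, q}) [(u, x), (v, y)])"
    "distinct (map (\<lambda>(p, q). {p, q}) [(u, v), (x, y)])"
    using non_edges(1) \<open>x \<noteq> v\<close> rng[OF edges(1)] by (simp_all add: doubleton_eq_iff)
  show "mset (endpoints [(u, x), (v, y)]) = mset (endpoints [(u, v), (x, y)])"
    by (simp add: endpoints_def add_mset_commute)
qed

lemma realizes_three_switch:
  assumes re: "realizes G d" and edges: "G u x" "G v y" "G a b"
    and non_edges: "u \<noteq> v" "\<not> G u v" "y \<noteq> a" "\<not> G y a" "x \<noteq> b" "\<not> G x b"
    and a: "a \<notin> {u, v, x}"
  shows "realizes (switch G [(u, x), (v, y), (a, b)] [(u, v), (y, a), (x, b)]) d"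
proof (rule realizes_switch[OF re])
  have rng: "G p q \<Longrightarrow> p < length d \<and> q < length d \<and> p \<noteq> q" for p q
    using re by (auto simp: realizes_def is_graph_def)
  have "x \<noteq> v" using edges(1) non_edges(2) by blast
  show "\<forall>(p, q) \<in> set [(u, x), (v, y), (a, b)]. G p q" using edges by simp
  show "\<forall>(p, q) \<in> set [(u, v), (y, a), (x, b)]. p \<noteq> q \<and> p < length d \<and> q < length d \<and> \<not> G p q"
    using non_edges rng[OF edges(1)] rng[OF edges(2)] rng[OF edges(3)] by simp
  show "distinct (map (\<lambda>(p, q). {p, q}) [(u, x), (v, y), (a, b)])"
    "distinct (map (\<lambda>(p, q). {p, q}) [(u, v), (y, a), (x, b)])"
    using non_edges(1,3) \<open>x \<noteq> v\<close> a rng[OF edges(1)] rng[OF edges(3)]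
    by (simp_all add: doubleton_eq_iff)
  show "mset (endpoints [(u, x), (v, y), (a, b)]) = mset (endpoints [(u, v), (y, a), (x, b)])"
    by (simp add: endpoints_def add_mset_commute)
qed

definition copy_edges :: "nat \<Rightarrow> (nat \<Rightarrow> nat \<Rightarrow> bool) \<Rightarrow> (nat \<Rightarrow> nat) \<Rightarrow> nat set set" where
  "copy_edges k H idx = {{idx j, idx j'} | j j'. j < k \<and> j' < k \<and> H j j'}"

lemma realization_by_switch:
  assumes switched: "realizes (switch G rs as) d"
    and kept: "edges rs \<inter> copy_edges k H idx = {}" and added: "(idx j0, idx j1) \<in> set as"
  shows "\<exists>G'. realizes G' d \<and> G' (idx j0) (idx j1) \<and>
     (\<forall>j j'. j < k \<longrightarrow> j' < k \<longrightarrow> H j j' \<longrightarrow> G (idx j) (idx j') \<longrightarrow> G' (idx j) (idx j'))"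
proof (rule exI[of _ "switch G rs as"], intro conjI allI impI)
  show "realizes (switch G rs as) d" by (rule switched)
  show "switch G rs as (idx j0) (idx j1)" using edgesI[OF added] unfolding switch_def by simp
  fix j j' assume j: "j < k" "j' < k" "H j j'" and "G (idx j) (idx j')"
  have "{idx j, idx j'} \<in> copy_edges k H idx" using j unfolding copy_edges_def by blast
  with kept \<open>G (idx j) (idx j')\<close> show "switch G rs as (idx j) (idx j')" unfolding switch_def by blast
qed

lemma not_copy_edge:
  assumes H: "is_graph k H" and idx_inj: "inj_on idx {0..<k}"
    and i: "i < k" and z: "z \<notin> idx ` {j. j < k \<and> H i j}"
  shows "{idx i, z} \<notin> copy_edges k H idx"
proof
  assume "{idx i, z} \<in> copy_edges k H idx"
  then obtain j j' where jj: "j < k" "j' < k" "H j j'" "{idx i, z} = {idx j, idx j'}"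
    unfolding copy_edges_def by blast
  then have "(i = j \<and> z = idx j') \<or> (i = j' \<and> z = idx j)"
    using idx_inj i unfolding inj_on_def by (auto simp: doubleton_eq_iff)
  moreover have "H j' j" using H jj(3) by (simp add: is_graph_def)
  ultimately show False using z jj by blast
qed

lemma exists_edge_outside_copy:
  assumes H: "is_graph k H" and re: "realizes G d"
    and idx_range: "\<And>j. j < k \<Longrightarrow> idx j < length d"
    and idx_inj: "inj_on idx {0..<k}"
    and idx_deg: "\<And>j. j < k \<Longrightarrow> d ! (idx j) \<ge> degree k H j"
    and j: "j0 < k" "j1 < k" "H j0 j1" "\<not> G (idx j0) (idx j1)"
  shows "\<exists>x. G (idx j0) x \<and> {idx j0, x} \<notin> copy_edges k H idx"
proof -
  define J where "J = {j. j < k \<and> H j0 j}"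
  have J: "finite J" "card J \<le> d ! idx j0" "j1 \<in> J"
    using idx_deg[OF j(1)] j unfolding J_def degree_def by auto
  obtain x where "G (idx j0) x" "x \<notin> idx ` J"
    using exists_neighbour_outside_image[where idx = idx, OF re idx_range[OF j(1)] J j(4)] by blast
  moreover have "{idx j0, x} \<notin> copy_edges k H idx"
    using not_copy_edge[OF H idx_inj j(1)] \<open>x \<notin> idx ` J\<close> unfolding J_def by blast
  ultimately show ?thesis by blast
qed

lemma realization_with_copy_edge:
  assumes H: "is_graph k H"
    and bound: "\<forall>x \<in> set d. x \<le> M"
    and idx_range: "\<And>j. j < k \<Longrightarrow> idx j < length d"
    and idx_inj: "inj_on idx {0..<k}"
    and idx_deg: "\<And>j. j < k \<Longrightarrow> d ! (idx j) \<ge> degree k H j"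
    and pos: "card {i. i < length d \<and> d ! i > 0} \<ge> 2 * M ^ 2 + k"
    and re: "realizes G d"
    and j: "j0 < k" "j1 < k" "H j0 j1" "\<not> G (idx j0) (idx j1)"
  shows "\<exists>G'. realizes G' d \<and> G' (idx j0) (idx j1) \<and>
     (\<forall>j j'. j < k \<longrightarrow> j' < k \<longrightarrow> H j j' \<longrightarrow> G (idx j) (idx j') \<longrightarrow> G' (idx j) (idx j'))"
proof -
  define u where "u = idx j0"
  define v where "v = idx j1"
  have sym: "G p q \<Longrightarrow> G q p" for p q
    using re by (auto simp: realizes_def is_graph_def)
  have "j0 \<noteq> j1" "H j1 j0" using H j(3) by (simp_all add: is_graph_def)
  have uv: "u \<noteq> v" "\<not> G u v" "\<not> G v u"
    using inj_onD[OF idx_inj, of j0 j1] \<open>j0 \<noteq> j1\<close> j sym unfolding u_def v_def by auto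
  obtain x where x: "G u x" "{u, x} \<notin> copy_edges k H idx"
    using exists_edge_outside_copy[OF H re idx_range idx_inj idx_deg j] unfolding u_def by blast
  obtain y where y: "G v y" "{v, y} \<notin> copy_edges k H idx"
    using exists_edge_outside_copy[OF H re idx_range idx_inj idx_deg j(2,1) \<open>H j1 j0\<close>] uv(3)
    unfolding u_def v_def by blast
  have uv_added: "(idx j0, idx j1) \<in> set ((u, v) # as)" for as unfolding u_def v_def by simp
  show ?thesis
  proof (cases "x \<noteq> y \<and> \<not> G x y")
    case True
    then have "realizes (switch G [(u, x), (v, y)] [(u, v), (x, y)]) d"
      using realizes_two_switch[OF re x(1) y(1) uv(1,2)] by blast
    moreover have "edges [(u, x), (v, y)] \<inter> copy_edges k H idx = {}"
      using x(2) y(2) by (simp add: edges_def)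
    ultimately show ?thesis using uv_added by (rule realization_by_switch)
  next
    case False
    let ?I = "idx ` {0..<k}"
    have "card ?I + 2 * M ^ 2 \<le> card {i. i < length d \<and> d ! i > 0}"
      using pos card_image_le[of "{0..<k}" idx] by simp
    moreover have "finite ?I" "u \<in> ?I" "v \<in> ?I" using j unfolding u_def v_def by auto
    ultimately obtain a b where ab: "G a b" "a \<notin> ?I" "a \<noteq> x" "\<not> G x a" "\<not> G y a" "\<not> G x b"
      using exists_edge_far_from[OF re bound _ _ x(1) _ y(1)] by blast
    have "y \<noteq> a" using False ab(3,4) by blast
    moreover have "x \<noteq> b" using ab(1,4) sym by blast
    moreover have "a \<notin> {u, v, x}" using ab(2,3) \<open>u \<in> ?I\<close> \<open>v \<in> ?I\<close> by blast
    ultimately have "realizes (switch G [(u, x), (v, y), (a, b)] [(u, v), (y, a), (x, b)]) d"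
      using realizes_three_switch[OF re x(1) y(1) ab(1) uv(1,2)] ab(5,6) by blast
    moreover have "{a, b} \<notin> copy_edges k H idx"
      using ab(2) unfolding copy_edges_def by (auto simp: doubleton_eq_iff)
    then have "edges [(u, x), (v, y), (a, b)] \<inter> copy_edges k H idx = {}"
      using x(2) y(2) by (simp add: edges_def)
    ultimately show ?thesis using uv_added by (rule realization_by_switch)
  qed
qed

theorem lemma2p3:
  fixes H :: "nat \<Rightarrow> nat \<Rightarrow> bool" and k :: nat
    and d :: "nat list" and M :: nat and idx :: "nat \<Rightarrow> nat"
  assumes H: "is_graph k H"
    and H_sorted: "\<And>j j'. j \<le> j' \<Longrightarrow> j' < k \<Longrightarrow> degree k H j' \<le> degree k H j"
    and graphic: "graphic d"
    and bound: "\<forall>x \<in> set d. x \<le> M"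
    and idx_range: "\<And>j. j < k \<Longrightarrow> idx j < length d"
    and idx_inj: "inj_on idx {0..<k}"
    and idx_deg: "\<And>j. j < k \<Longrightarrow> d ! (idx j) \<ge> degree k H j"
    and pos: "card {i. i < length d \<and> d ! i > 0} \<ge> 2 * M ^ 2 + k"
  shows "\<exists>G. realizes G d \<and>
           (\<forall>j j'. j < k \<longrightarrow> j' < k \<longrightarrow> H j j' \<longrightarrow> G (idx j) (idx j'))"
proof -
  define missing where
    "missing G = {(j, j'). j < k \<and> j' < k \<and> H j j' \<and> \<not> G (idx j) (idx j')}" for G :: "nat \<Rightarrow> nat \<Rightarrow> bool"
  have finite_missing: "finite (missing G)" for G
    by (rule finite_subset[of _ "{..<k} \<times> {..<k}"]) (auto simp: missing_def)
  obtain G0 where "realizes G0 d" using graphic unfolding graphic_def by blast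
  then obtain G where G: "realizes G d"
    and least: "\<And>G'. realizes G' d \<Longrightarrow> card (missing G) \<le> card (missing G')"
    using ex_has_least_nat[of "\<lambda>G. realizes G d" G0 "\<lambda>G. card (missing G)"] by blast
  have "missing G = {}"
  proof (rule ccontr)
    assume "missing G \<noteq> {}"
    then obtain j0 j1 where jj: "(j0, j1) \<in> missing G" by auto
    then have j: "j0 < k" "j1 < k" "H j0 j1" "\<not> G (idx j0) (idx j1)" unfolding missing_def by auto
    obtain G' where G': "realizes G' d" "G' (idx j0) (idx j1)"
      "\<forall>j j'. j < k \<longrightarrow> j' < k \<longrightarrow> H j j' \<longrightarrow> G (idx j) (idx j') \<longrightarrow> G' (idx j) (idx j')"
      using realization_with_copy_edge[OF H bound idx_range idx_inj idx_deg pos G j] by blast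
    have "missing G' \<subseteq> missing G - {(j0, j1)}" using G'(2,3) unfolding missing_def by auto
    then have "missing G' \<subset> missing G" using jj by blast
    then have "card (missing G') < card (missing G)" by (rule psubset_card_mono[OF finite_missing])
    then show False using least[OF G'(1)] by simp
  qed
  then show ?thesis using G unfolding missing_def by blast
qed

end
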